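(* Every finite, full-dimensional, lattice-convex set $X \subseteq \mathbb{Z}^3$ satisfies $\mathrm{rc}_\ell(X) \ge 4$.
   Context: A set $X \subseteq \mathbb{Z}^d$ is lattice-convex if $\mathrm{conv}(X) \cap \mathbb{Z}^d = X$. For $Y \subseteq \mathbb{Z}^d$, $\mathrm{rc}(X,Y)$ is the smallest number of inequalities in a linear system $Ax \le b$ satisfied by all points of $X$ and such that each point of $Y\setminus X$ violates at least one inequality; with $B_t = [-t,t]^d\cap\mathbb{Z}^d$, $\mathrm{rc}_\ell(X) = \max_{t\in\mathbb{Z}_{>0}} \mathrm{rc}(X,B_t)$. *)

theory Defs
  imports "HOL-Analysis.Analysis" "HOL-Library.Extended_Nat"
begin

text \<open>Points of Z^d are modelled as integer vectors inside real^'d.\<close>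

definition lattice_points :: "(real^'n) set" where
  "lattice_points = {x. \<forall>i. x $ i \<in> \<int>}"

definition lattice_convex :: "(real^'n) set \<Rightarrow> bool" where
  "lattice_convex X \<longleftrightarrow> X \<subseteq> lattice_points \<and> convex hull X \<inter> lattice_points = X"

definition box_B :: "nat \<Rightarrow> (real^'n) set" where
  "box_B t = {x \<in> lattice_points. \<forall>i. \<bar>x $ i\<bar> \<le> real t}"

definition rc :: "(real^'n) set \<Rightarrow> (real^'n) set \<Rightarrow> nat" where
  "rc X Y = (LEAST k. \<exists>(a :: nat \<Rightarrow> real^'n) (b :: nat \<Rightarrow> real).
      (\<forall>i<k. \<forall>x\<in>X. a i \<bullet> x \<le> b i) \<and>
      (\<forall>y\<in>Y - X. \<exists>i<k. a i \<bullet> y > b i))"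

definition rc_l :: "(real^'n) set \<Rightarrow> enat" where
  "rc_l X = (SUP t\<in>{t::nat. t > 0}. enat (rc X (box_B t)))"

end

(*
  Let a_i x <= b_i (i < k) be valid on X and cut off every point of B_T - X. Suppose a lattice
  vector w has |a_i w| at most the width of X in direction a_i for every i, and all translates
  x + w and x - w of points of X lie in B_T - X. If a_i increases along w, translate the
  minimiser of a_i on X by w: the result stays below the maximum of a_i on X, so a second
  inequality must cut it off. Hence two inequalities increase along w and two along -w, and k >= 4.

  To find such a w when k <= 3, divide each a_i by its width; full-dimensionality of X bounds
  the resulting forms alpha_i. Every short nonzero lattice vector u is increased by some alpha_i,
  because the maximiser of u on X, translated by u, is cut off. By rounding, no direction is
  uniformly negative for all alpha_i, and as k <= 3 <= d linear algebra yields a unit vector v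
  nearly orthogonal to every alpha_i. Simultaneous Dirichlet approximation of the multiples of v
  gives a long lattice vector w with |alpha_i w| <= 1; choosing T large enough for all these
  vectors shows rc(X, B_T) >= 4.
*)

theory Submission
  imports Defs
begin

lemma lattice_points_add: "x \<in> lattice_points \<Longrightarrow> y \<in> lattice_points \<Longrightarrow> x + y \<in> lattice_points"
  by (auto simp: lattice_points_def)

lemma lattice_points_uminus: "x \<in> lattice_points \<Longrightarrow> - x \<in> lattice_points"
  by (auto simp: lattice_points_def)

lemma lattice_points_scaleR_nat: "x \<in> lattice_points \<Longrightarrow> real m *\<^sub>R x \<in> lattice_points"
  by (auto simp: lattice_points_def)

lemma axis_in_lattice_points: "axis j 1 \<in> lattice_points"
  by (auto simp: lattice_points_def axis_def)

lemma finite_box_B: "finite (box_B t :: (real^'n) set)"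
proof -
  let ?vec = "\<lambda>f. (\<chi> i. real_of_int (f i)) :: real^'n"
  have "box_B t \<subseteq> ?vec ` (PiE UNIV (\<lambda>_. {-int t..int t}))"
  proof
    fix x :: "real^'n"
    assume x: "x \<in> box_B t"
    have int: "x $ i = of_int \<lfloor>x $ i\<rfloor>" for i
      using x by (auto simp: box_B_def lattice_points_def elim!: Ints_cases)
    have "\<bar>x $ i\<bar> \<le> real t" for i
      using x by (auto simp: box_B_def)
    then have "\<lfloor>x $ i\<rfloor> \<in> {-int t..int t}" for i
      using int[of i] by (metis abs_le_iff atLeastAtMost_iff minus_le_iff of_int_le_iff
          of_int_minus of_int_of_nat_eq)
    moreover have "x = ?vec (\<lambda>i. \<lfloor>x $ i\<rfloor>)"
      using int by (simp add: vec_eq_iff)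
    ultimately show "x \<in> ?vec ` (PiE UNIV (\<lambda>_. {-int t..int t}))"
      by (auto simp: PiE_def extensional_def)
  qed
  then show ?thesis
    by (rule finite_subset) (intro finite_imageI finite_PiE; simp)
qed

lemma lattice_point_in_box_B:
  assumes "y \<in> lattice_points" "norm y \<le> real t"
  shows "y \<in> box_B t"
proof -
  have "\<bar>y $ i\<bar> \<le> real t" for i
    using assms(2) component_le_norm_cart[of y i] by linarith
  then show ?thesis using assms(1) by (simp add: box_B_def)
qed

section \<open>Separating systems and widths\<close>

definition separating_system :: "nat \<Rightarrow> (nat \<Rightarrow> 'a::real_inner) \<Rightarrow> (nat \<Rightarrow> real) \<Rightarrow> 'a set \<Rightarrow> 'a set \<Rightarrow> bool"
  where "separating_system k a b X Y \<longleftrightarrow>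
    (\<forall>i<k. \<forall>x\<in>X. a i \<bullet> x \<le> b i) \<and> (\<forall>y\<in>Y - X. \<exists>i<k. a i \<bullet> y > b i)"

lemma separating_system_exists:
  fixes X Y :: "'a::euclidean_space set"
  assumes "finite X" "finite Y" "Y \<inter> convex hull X \<subseteq> X"
  shows "\<exists>k a b. separating_system k a b X Y"
proof -
  have "\<exists>a b. (\<forall>x\<in>X. a \<bullet> x \<le> b) \<and> a \<bullet> y > b" if y: "y \<in> Y - X" for y
  proof -
    have "y \<notin> convex hull X"
      using y assms(3) by auto
    then obtain a b where "a \<bullet> y < b" "\<forall>x\<in>convex hull X. b < a \<bullet> x"
      using separating_hyperplane_closed_point[OF convex_convex_hull
          compact_imp_closed[OF finite_imp_compact_convex_hull[OF assms(1)]]] by blast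
    then have "\<forall>x\<in>X. (-a) \<bullet> x \<le> -b" "(-a) \<bullet> y > -b"
      using hull_subset[of X convex] by fastforce+
    then show ?thesis by blast
  qed
  then obtain a b where ab: "\<And>y. y \<in> Y - X \<Longrightarrow> (\<forall>x\<in>X. a y \<bullet> x \<le> b y) \<and> a y \<bullet> y > b y"
    by metis
  obtain enum where enum: "bij_betw enum {0..<card (Y - X)} (Y - X)"
    using ex_bij_betw_nat_finite assms(2) by blast
  have "\<forall>i<card (Y - X). \<forall>x\<in>X. (a \<circ> enum) i \<bullet> x \<le> (b \<circ> enum) i"
    using ab bij_betwE[OF enum] by auto
  moreover have "\<forall>y\<in>Y - X. \<exists>i<card (Y - X). (a \<circ> enum) i \<bullet> y > (b \<circ> enum) i"
  proof
    fix y
    assume y: "y \<in> Y - X"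
    then obtain i where "i < card (Y - X)" "enum i = y"
      using bij_betw_imp_surj_on[OF enum] by force
    then show "\<exists>i<card (Y - X). (a \<circ> enum) i \<bullet> y > (b \<circ> enum) i"
      using ab[OF y] by auto
  qed
  ultimately show ?thesis
    unfolding separating_system_def by blast
qed

lemma le_rc:
  fixes X Y :: "(real^'n) set"
  assumes "finite X" "finite Y" "Y \<inter> convex hull X \<subseteq> X"
    and "\<And>k a b. separating_system k a b X Y \<Longrightarrow> m \<le> k"
  shows "m \<le> rc X Y"
proof -
  \<comment> \<open>Without a separating system, rc would be the junk value LEAST k. False.\<close>
  have "rc X Y = (LEAST k. \<exists>a b. separating_system k a b X Y)"
    by (simp add: rc_def separating_system_def)
  also have "m \<le> \<dots>"
  proof (rule LeastI2_ex)
    show "\<exists>k a b. separating_system k a b X Y"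
      using separating_system_exists[OF assms(1-3)] .
  next
    fix k
    assume "\<exists>a b. separating_system k a b X Y"
    then show "m \<le> k"
      using assms(4) by blast
  qed
  finally show ?thesis .
qed

lemma rc_box_B_le_rc_l: "0 < t \<Longrightarrow> enat (rc X (box_B t)) \<le> rc_l X"
  unfolding rc_l_def by (intro SUP_upper) simp

definition width :: "'a::real_inner set \<Rightarrow> 'a \<Rightarrow> real"
  where "width X a = (MAX x\<in>X. a \<bullet> x) - (MIN x\<in>X. a \<bullet> x)"

lemma inner_diff_le_width:
  assumes "finite X" "x \<in> X" "y \<in> X"
  shows "a \<bullet> x - a \<bullet> y \<le> width X a"
proof -
  have "a \<bullet> x \<le> (MAX x\<in>X. a \<bullet> x)" "(MIN x\<in>X. a \<bullet> x) \<le> a \<bullet> y"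
    using assms by auto
  then show ?thesis by (simp add: width_def)
qed

lemma width_nonneg: "finite X \<Longrightarrow> X \<noteq> {} \<Longrightarrow> 0 \<le> width X a"
  using inner_diff_le_width[of X _ _ a] by fastforce

lemma span_diffs_eq_UNIV:
  fixes X :: "'a::euclidean_space set"
  assumes "aff_dim X = DIM('a)" "x0 \<in> X"
  shows "span ((\<lambda>x. x - x0) ` X) = UNIV"
proof -
  have "affine hull X = UNIV"
    using assms(1) aff_dim_eq_full by blast
  moreover have "surj (\<lambda>x. x - x0)"
    by (rule surjI[of _ "\<lambda>y. y + x0"]) simp
  ultimately show ?thesis
    using diffs_affine_hull_span[OF assms(2)] by simp
qed

lemma norm_le_width:
  fixes X :: "'a::euclidean_space set"
  assumes "finite X" "aff_dim X = DIM('a)"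
  shows "\<exists>C>0. \<forall>a. norm a \<le> C * width X a"
proof -
  obtain x0 where x0: "x0 \<in> X"
    using assms(2) aff_dim_empty by fastforce
  define D where "D = (\<lambda>x. x - x0) ` X"
  have "\<forall>e. \<exists>c. e = (\<Sum>v\<in>D. c v *\<^sub>R v)"
    using span_finite[of D] span_diffs_eq_UNIV[OF assms(2) x0] assms(1) by (auto simp: D_def)
  then obtain c where c: "\<And>e. e = (\<Sum>v\<in>D. c e v *\<^sub>R v)"
    by metis
  define C where "C = 1 + (\<Sum>e\<in>Basis. \<Sum>v\<in>D. \<bar>c e v\<bar>)"
  have "0 \<le> (\<Sum>e\<in>Basis. \<Sum>v\<in>D. \<bar>c e v\<bar>)"
    by (intro sum_nonneg) auto
  then have C: "C > 0" "(\<Sum>e\<in>Basis. \<Sum>v\<in>D. \<bar>c e v\<bar>) \<le> C"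
    by (auto simp: C_def)
  have "norm a \<le> C * width X a" for a
  proof -
    have "\<bar>a \<bullet> v\<bar> \<le> width X a" if "v \<in> D" for v
      using that inner_diff_le_width[OF assms(1) _ x0] inner_diff_le_width[OF assms(1) x0]
      by (auto simp: D_def inner_diff_right abs_le_iff)
    then have ae: "\<bar>a \<bullet> e\<bar> \<le> (\<Sum>v\<in>D. \<bar>c e v\<bar>) * width X a" for e
    proof -
      have "\<bar>a \<bullet> e\<bar> = \<bar>\<Sum>v\<in>D. c e v * (a \<bullet> v)\<bar>"
        by (subst c) (simp add: inner_sum_right)
      also have "\<dots> \<le> (\<Sum>v\<in>D. \<bar>c e v\<bar> * \<bar>a \<bullet> v\<bar>)"
        by (rule order_trans[OF sum_abs]) (simp add: abs_mult)
      also have "\<dots> \<le> (\<Sum>v\<in>D. \<bar>c e v\<bar> * width X a)"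
        by (intro sum_mono mult_left_mono \<open>\<And>v. v \<in> D \<Longrightarrow> \<bar>a \<bullet> v\<bar> \<le> width X a\<close>) auto
      finally show ?thesis by (simp add: sum_distrib_right)
    qed
    have "norm a \<le> (\<Sum>e\<in>Basis. \<bar>a \<bullet> e\<bar>)"
      by (rule norm_le_l1)
    also have "\<dots> \<le> (\<Sum>e\<in>Basis. (\<Sum>v\<in>D. \<bar>c e v\<bar>) * width X a)"
      by (intro sum_mono ae)
    also have "\<dots> = (\<Sum>e\<in>Basis. \<Sum>v\<in>D. \<bar>c e v\<bar>) * width X a"
      by (simp add: sum_distrib_right)
    also have "\<dots> \<le> C * width X a"
      using C(2) width_nonneg[OF assms(1)] x0 by (intro mult_right_mono) auto
    finally show ?thesis .
  qed
  then show ?thesis using C(1) by blast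
qed

lemma normalized_by_width:
  assumes "finite X" "X \<noteq> {}" "0 < C" "\<forall>a. norm a \<le> C * width X a"
  shows "norm (a /\<^sub>R width X a) \<le> C"
    and "0 < a \<bullet> u \<Longrightarrow> 0 < (a /\<^sub>R width X a) \<bullet> u"
    and "\<bar>(a /\<^sub>R width X a) \<bullet> w\<bar> \<le> 1 \<Longrightarrow> \<bar>a \<bullet> w\<bar> \<le> width X a"
proof -
  have pos: "0 < width X a" if "a \<noteq> 0"
  proof -
    have "0 < norm a"
      using that by simp
    then have "0 < C * width X a"
      using assms(4) by (meson order_less_le_trans)
    then show ?thesis
      using assms(3) by (simp add: zero_less_mult_iff)
  qed
  show "norm (a /\<^sub>R width X a) \<le> C"
    using assms(3,4) pos by (cases "a = 0") (auto simp: field_simps)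
  show "0 < (a /\<^sub>R width X a) \<bullet> u" if "0 < a \<bullet> u"
    using that pos by (cases "a = 0") auto
  show "\<bar>a \<bullet> w\<bar> \<le> width X a" if "\<bar>(a /\<^sub>R width X a) \<bullet> w\<bar> \<le> 1"
    using that pos width_nonneg[OF assms(1,2)] by (cases "a = 0") (auto simp: field_simps)
qed

lemma separating_system_cuts_translate:
  assumes "separating_system k a b X Y" "x \<in> X" "x + w \<in> Y - X"
  obtains i where "i < k" "b i < a i \<bullet> (x + w)" "0 < a i \<bullet> w"
proof -
  obtain i where i: "i < k" "b i < a i \<bullet> (x + w)"
    using assms(1,3) unfolding separating_system_def by blast
  moreover have "a i \<bullet> x \<le> b i"
    using assms(1,2) i(1) by (auto simp: separating_system_def)
  ultimately show thesis
    using that by (simp add: inner_add_right)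
qed

lemma separating_system_increases_along:
  assumes "finite X" "X \<noteq> {}" "separating_system k a b X Y" "u \<noteq> 0" "\<forall>x\<in>X. x + u \<in> Y"
  obtains i where "i < k" "0 < a i \<bullet> u"
proof -
  obtain y where y: "y \<in> X" "(MAX x\<in>X. u \<bullet> x) = u \<bullet> y"
    using obtains_MAX[OF assms(1,2)] by metis
  have "u \<bullet> y < u \<bullet> (y + u)"
    using assms(4) by (simp add: inner_add_right)
  then have "y + u \<notin> X"
    using y assms(1) by (metis Max_ge finite_imageI imageI leD)
  then have "y + u \<in> Y - X"
    using y(1) assms(5) by blast
  then show thesis
    using separating_system_cuts_translate[OF assms(3) y(1)] that by metis
qed

lemma separating_system_two_increasing:
  assumes "finite X" "X \<noteq> {}" "separating_system k a b X Y"
    and "\<forall>x\<in>X. x + w \<in> Y - X" "\<forall>i<k. a i \<bullet> w \<le> width X (a i)"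
  shows "\<exists>i j. i < k \<and> j < k \<and> i \<noteq> j \<and> 0 < a i \<bullet> w \<and> 0 < a j \<bullet> w"
proof -
  obtain x0 where x0: "x0 \<in> X"
    using assms(2) by blast
  obtain i where i: "i < k" "0 < a i \<bullet> w"
    using separating_system_cuts_translate[OF assms(3) x0] assms(4) x0 by metis
  obtain z where z: "z \<in> X" "(MIN x\<in>X. a i \<bullet> x) = a i \<bullet> z"
    using obtains_MIN[OF assms(1,2)] by metis
  obtain y where y: "y \<in> X" "(MAX x\<in>X. a i \<bullet> x) = a i \<bullet> y"
    using obtains_MAX[OF assms(1,2)] by metis
  \<comment> \<open>The translate by w of the minimiser z of a i stays below the maximum of a i on X.\<close>
  have "a i \<bullet> (z + w) \<le> a i \<bullet> y"
    using assms(5)[rule_format, OF i(1)] z(2) y(2) by (simp add: inner_add_right width_def)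
  also have "\<dots> \<le> b i"
    using assms(3) i(1) y(1) by (auto simp: separating_system_def)
  finally have "a i \<bullet> (z + w) \<le> b i" .
  moreover obtain j where "j < k" "b j < a j \<bullet> (z + w)" "0 < a j \<bullet> w"
    using separating_system_cuts_translate[OF assms(3) z(1)] assms(4) z(1) by metis
  ultimately show ?thesis
    using i by force
qed

lemma four_le_separating_system:
  assumes "finite X" "X \<noteq> {}" "separating_system k a b X Y"
    and "\<forall>x\<in>X. x + w \<in> Y - X" "\<forall>x\<in>X. x - w \<in> Y - X"
    and "\<forall>i<k. \<bar>a i \<bullet> w\<bar> \<le> width X (a i)"
  shows "4 \<le> k"
proof -
  obtain i1 i2 where i: "i1 < k" "i2 < k" "i1 \<noteq> i2" "0 < a i1 \<bullet> w" "0 < a i2 \<bullet> w"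
    using separating_system_two_increasing[OF assms(1-4)] assms(6) by force
  obtain j1 j2 where j: "j1 < k" "j2 < k" "j1 \<noteq> j2" "0 < a j1 \<bullet> (- w)" "0 < a j2 \<bullet> (- w)"
    using separating_system_two_increasing[OF assms(1-3), of "- w"] assms(5,6) by force
  have "{i1, i2, j1, j2} \<subseteq> {..<k}"
    using i j by auto
  moreover have "card {i1, i2, j1, j2} = 4"
  proof -
    have "{i1, i2} \<inter> {j1, j2} = {}"
      using i j by auto
    then have "card ({i1, i2} \<union> {j1, j2}) = card {i1, i2} + card {j1, j2}"
      by (intro card_Un_disjoint) auto
    then show ?thesis
      using i(3) j(3) by (simp add: insert_commute)
  qed
  ultimately show ?thesis
    using card_mono[of "{..<k}" "{i1, i2, j1, j2}"] by simp
qed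

section \<open>Lattice vectors nearly orthogonal to few linear forms\<close>

lemma norm_le_CARD_mult:
  fixes x :: "real^'n"
  assumes "\<And>i. \<bar>x $ i\<bar> \<le> c"
  shows "norm x \<le> real CARD('n) * c"
  using norm_le_l1_cart[of x] sum_bounded_above[of UNIV "\<lambda>i. \<bar>x $ i\<bar>" c] assms by simp

lemma one_le_CARD: "1 \<le> real CARD('n::finite)"
  using zero_less_card_finite[where 'a='n] by linarith

lemma lattice_point_near:
  fixes q :: "real^'n"
  obtains u where "u \<in> lattice_points" "norm (u - q) \<le> real CARD('n) / 2"
proof
  define u :: "real^'n" where "u = (\<chi> j. of_int \<lfloor>q $ j + 1/2\<rfloor>)"
  show "u \<in> lattice_points"
    by (simp add: u_def lattice_points_def)
  have "\<bar>(u - q) $ j\<bar> \<le> 1/2" for j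
    using floor_correct[of "q $ j + 1/2"] unfolding u_def abs_le_iff by simp linarith
  then show "norm (u - q) \<le> real CARD('n) / 2"
    using norm_le_CARD_mult[of "u - q" "1/2"] by simp
qed

lemma frac_pigeonhole:
  fixes v :: "real^'n" and Q :: nat
  assumes "1 \<le> Q"
  obtains p q where "p < q" "q \<le> Q ^ CARD('n)"
    "\<And>j. \<bar>frac (real q * v $ j) - frac (real p * v $ j)\<bar> < 1 / real Q"
proof -
  \<comment> \<open>Of the Q^d + 1 points frac (n v), two lie in the same box of side 1/Q.\<close>
  define cell where "cell n = (\<lambda>j. \<lfloor>real Q * frac (real n * v $ j)\<rfloor>)" for n :: nat
  have "cell n \<in> PiE UNIV (\<lambda>_. {0..<int Q})" for n
  proof -
    have "0 \<le> frac (real n * v $ j)" "frac (real n * v $ j) < 1" for j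
      by (auto simp: frac_lt_1)
    then have "0 \<le> real Q * frac (real n * v $ j)" "real Q * frac (real n * v $ j) < real Q" for j
      using assms by auto
    then show ?thesis
      by (simp add: cell_def PiE_iff floor_less_iff)
  qed
  moreover have "card {0..Q ^ CARD('n)} > card (PiE (UNIV :: 'n set) (\<lambda>_. {0..<int Q}))"
    by (simp add: card_PiE)
  ultimately have "\<not> inj_on cell {0..Q ^ CARD('n)}"
    using card_inj_on_le[of cell _ "PiE UNIV (\<lambda>_. {0..<int Q})"]
    by (metis finite_PiE finite_class.finite_UNIV finite_atLeastLessThan_int image_subset_iff
        not_le)
  then obtain p q where pq: "p < q" "q \<le> Q ^ CARD('n)" "cell p = cell q"
    unfolding inj_on_def by (metis atLeastAtMost_iff linorder_neqE_nat)
  have "\<bar>frac (real q * v $ j) - frac (real p * v $ j)\<bar> < 1 / real Q" for j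
  proof -
    have "\<lfloor>real Q * frac (real p * v $ j)\<rfloor> = \<lfloor>real Q * frac (real q * v $ j)\<rfloor>"
      using pq(3) unfolding cell_def by metis
    then have "\<bar>real Q * frac (real q * v $ j) - real Q * frac (real p * v $ j)\<bar> < 1"
      by linarith
    then have "real Q * \<bar>frac (real q * v $ j) - frac (real p * v $ j)\<bar> < 1"
      by (metis abs_mult abs_of_nat right_diff_distrib)
    then show ?thesis
      using assms by (simp add: field_simps)
  qed
  with pq(1,2) show thesis
    using that by blast
qed

lemma simultaneous_dirichlet:
  fixes v :: "real^'n" and Q :: nat
  assumes "1 \<le> Q"
  obtains m z where "1 \<le> m" "m \<le> Q ^ CARD('n)" "z \<in> lattice_points"
    "norm (real m *\<^sub>R v - z) \<le> real CARD('n) / real Q"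
proof -
  obtain p q where pq: "p < q" "q \<le> Q ^ CARD('n)"
    "\<And>j. \<bar>frac (real q * v $ j) - frac (real p * v $ j)\<bar> < 1 / real Q"
    using frac_pigeonhole[OF assms] by blast
  define z :: "real^'n" where "z = (\<chi> j. of_int (\<lfloor>real q * v $ j\<rfloor> - \<lfloor>real p * v $ j\<rfloor>))"
  have "(real (q - p) *\<^sub>R v - z) $ j = frac (real q * v $ j) - frac (real p * v $ j)" for j
    using pq(1) by (simp add: z_def frac_def of_nat_diff algebra_simps)
  then have "\<bar>(real (q - p) *\<^sub>R v - z) $ j\<bar> \<le> 1 / real Q" for j
    using pq(3)[of j] by simp
  then have "norm (real (q - p) *\<^sub>R v - z) \<le> real CARD('n) / real Q"
    using norm_le_CARD_mult by fastforce
  moreover have "z \<in> lattice_points"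
    by (simp add: z_def lattice_points_def)
  ultimately show thesis
    using that[of "q - p" z] pq(1,2) by auto
qed

lemma linear_forms_solvable_or_common_kernel:
  fixes \<alpha> :: "nat \<Rightarrow> real^'n"
  assumes "k \<le> CARD('n)"
  shows "(\<exists>p. \<forall>i<k. \<alpha> i \<bullet> p = -1) \<or> (\<exists>v. v \<noteq> 0 \<and> (\<forall>i<k. \<alpha> i \<bullet> v = 0))"
proof -
  obtain enum :: "nat \<Rightarrow> 'n" where enum: "bij_betw enum {0..<CARD('n)} UNIV"
    using ex_bij_betw_nat_finite[OF finite_class.finite_UNIV] by blast
  define f where "f p = (\<chi> j. \<alpha> (inv_into {0..<CARD('n)} enum j) \<bullet> p)" for p :: "real^'n"
  have f: "f p $ enum i = \<alpha> i \<bullet> p" if "i < k" for i p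
    using that assms by (simp add: f_def bij_betw_inv_into_left[OF enum])
  have "linear f"
    by (auto simp: f_def linear_iff vec_eq_iff inner_add_right)
  show ?thesis
  proof (cases "inj f")
    case True
    obtain p where "(\<chi> j. -1) = f p"
      using surjD[OF linear_inj_imp_surj[OF \<open>linear f\<close> True]] by blast
    then have "\<alpha> i \<bullet> p = -1" if "i < k" for i
      using f[OF that, of p] by (metis vec_lambda_beta)
    then show ?thesis
      by blast
  next
    case False
    then obtain x y where "x \<noteq> y" "f x = f y"
      by (auto simp: inj_def)
    then have "x - y \<noteq> 0" "f (x - y) = 0"
      using linear_diff[OF \<open>linear f\<close>] by auto
    then have "x - y \<noteq> 0 \<and> (\<forall>i<k. \<alpha> i \<bullet> (x - y) = 0)"
      using f by (metis zero_index)
    then show ?thesis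
      by blast
  qed
qed

lemma no_uniformly_negative_direction:
  fixes \<alpha> :: "nat \<Rightarrow> real^'n" and C \<epsilon> :: real
  assumes "0 < k" "0 < \<epsilon>" "0 \<le> C" "\<forall>i<k. norm (\<alpha> i) \<le> C"
    and "\<forall>u\<in>lattice_points. u \<noteq> 0 \<longrightarrow> norm u \<le> (CARD('n) * C + 1) / \<epsilon> + CARD('n) \<longrightarrow>
           (\<exists>i<k. 0 < \<alpha> i \<bullet> u)"
    and "norm p \<le> 1"
  shows "\<exists>i<k. - \<epsilon> < \<alpha> i \<bullet> p"
proof (rule ccontr)
  assume "\<not> ?thesis"
  then have neg: "\<forall>i<k. \<alpha> i \<bullet> p \<le> - \<epsilon>"
    by force
  define L where "L = (CARD('n) * C + 1) / \<epsilon>"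
  have "L \<ge> 0"
    using assms(2,3) by (simp add: L_def)
  \<comment> \<open>A lattice point next to L p is a short vector on which every form is negative.\<close>
  obtain u where u: "u \<in> lattice_points" "norm (u - L *\<^sub>R p) \<le> CARD('n) / 2"
    using lattice_point_near by blast
  have u_neg: "\<alpha> i \<bullet> u < 0" if "i < k" for i
  proof -
    have "\<bar>\<alpha> i \<bullet> (u - L *\<^sub>R p)\<bar> \<le> C * (CARD('n) / 2)"
      using Cauchy_Schwarz_ineq2[of "\<alpha> i"] assms(3,4) u(2) that
      by (meson mult_mono norm_ge_zero order_trans)
    moreover have "L * (\<alpha> i \<bullet> p) \<le> L * - \<epsilon>"
      using neg that \<open>L \<ge> 0\<close> by (intro mult_left_mono) auto
    moreover have "\<alpha> i \<bullet> u = L * (\<alpha> i \<bullet> p) + \<alpha> i \<bullet> (u - L *\<^sub>R p)"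
      by (simp add: inner_diff_right)
    moreover have "L * - \<epsilon> = - (CARD('n) * C + 1)" "0 \<le> CARD('n) * C"
        "C * (CARD('n) / 2) = CARD('n) * C / 2"
      using assms(2,3) by (simp_all add: L_def)
    ultimately show ?thesis
      by linarith
  qed
  have "norm u \<le> L + CARD('n)"
  proof -
    have "L * norm p \<le> L"
      using assms(6) \<open>L \<ge> 0\<close> by (simp add: mult_left_le)
    then show ?thesis
      using norm_triangle_ineq[of "L *\<^sub>R p" "u - L *\<^sub>R p"] u(2) \<open>L \<ge> 0\<close> by simp
  qed
  moreover have "u \<noteq> 0"
    using u_neg[OF assms(1)] by auto
  ultimately obtain i where "i < k" "0 < \<alpha> i \<bullet> u"
    using assms(5) u(1) unfolding L_def by blast
  then show False
    using u_neg by force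
qed

lemma unit_vector_nearly_orthogonal:
  fixes \<alpha> :: "nat \<Rightarrow> real^'n" and C \<epsilon> :: real
  assumes "k \<le> CARD('n)" "0 < \<epsilon>" "0 \<le> C" "\<forall>i<k. norm (\<alpha> i) \<le> C"
    and "\<forall>u\<in>lattice_points. u \<noteq> 0 \<longrightarrow> norm u \<le> (CARD('n) * C + 1) / \<epsilon> + CARD('n) \<longrightarrow>
           (\<exists>i<k. 0 < \<alpha> i \<bullet> u)"
  obtains v where "norm v = 1" "\<forall>i<k. \<bar>\<alpha> i \<bullet> v\<bar> \<le> \<epsilon>"
proof -
  have "0 \<le> (CARD('n) * C + 1) / \<epsilon>"
    using assms(2,3) by simp
  then have "norm (axis j 1 :: real^'n) \<le> (CARD('n) * C + 1) / \<epsilon> + CARD('n)" for j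
    unfolding norm_axis_1 using one_le_CARD[where 'n='n] by linarith
  then obtain i where "i < k"
    using assms(5) axis_in_lattice_points by (metis axis_eq_0_iff zero_neq_one)
  then have "0 < k"
    by simp
  \<comment> \<open>A solution of all the equations alpha i . p = -1 must be long, so p / norm p works.\<close>
  note no_negative = no_uniformly_negative_direction[OF \<open>0 < k\<close> assms(2-5)]
  from linear_forms_solvable_or_common_kernel[OF assms(1), of \<alpha>] show thesis
  proof
    assume "\<exists>p. \<forall>i<k. \<alpha> i \<bullet> p = -1"
    then obtain p where p: "\<forall>i<k. \<alpha> i \<bullet> p = -1"
      by blast
    have "1 / \<epsilon> < norm p"
      using no_negative[of "\<epsilon> *\<^sub>R p"] p assms(2) \<open>0 < k\<close>
      by (force simp: field_simps)
    moreover have "p \<noteq> 0"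
      using p \<open>0 < k\<close> by force
    ultimately have "\<forall>i<k. \<bar>\<alpha> i \<bullet> (p /\<^sub>R norm p)\<bar> \<le> \<epsilon>"
      using p assms(2) by (simp add: field_simps)
    then show thesis
      using that \<open>p \<noteq> 0\<close> by (metis norm_sgn sgn_div_norm)
  next
    assume "\<exists>v. v \<noteq> 0 \<and> (\<forall>i<k. \<alpha> i \<bullet> v = 0)"
    then obtain v where "v \<noteq> 0" "\<forall>i<k. \<alpha> i \<bullet> v = 0"
      by blast
    then show thesis
      using that[of "v /\<^sub>R norm v"] assms(2) by simp
  qed
qed

lemma lattice_vector_near_ray:
  fixes v :: "real^'n" and K Q :: nat
  assumes "1 \<le> Q"
  obtains w \<mu> where "w \<in> lattice_points" "real K \<le> \<mu>" "\<mu> \<le> real K * real Q ^ CARD('n)"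
    "norm (w - \<mu> *\<^sub>R v) \<le> real K * (real CARD('n) / real Q)"
proof -
  obtain m z where m: "1 \<le> m" "m \<le> Q ^ CARD('n)" and z: "z \<in> lattice_points"
    "norm (real m *\<^sub>R v - z) \<le> real CARD('n) / real Q"
    using simultaneous_dirichlet[OF assms] by blast
  have "real K *\<^sub>R z - (real K * real m) *\<^sub>R v = - (real K *\<^sub>R (real m *\<^sub>R v - z))"
    by (simp add: algebra_simps)
  then have "norm (real K *\<^sub>R z - (real K * real m) *\<^sub>R v) = real K * norm (real m *\<^sub>R v - z)"
    by simp
  then have "norm (real K *\<^sub>R z - (real K * real m) *\<^sub>R v) \<le> real K * (real CARD('n) / real Q)"
    using mult_left_mono[OF z(2), of "real K"] by simp
  moreover have "real K \<le> real K * real m" "real K * real m \<le> real K * real Q ^ CARD('n)"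
    using mult_left_mono[of 1 "real m" "real K"] mult_left_mono[of "real m" "real Q ^ CARD('n)" "real K"] m
    by (simp_all flip: of_nat_power)
  moreover have "real K *\<^sub>R z \<in> lattice_points"
    using z(1) by (rule lattice_points_scaleR_nat)
  ultimately show thesis
    using that by blast
qed

lemma long_lattice_vector_nearly_orthogonal:
  fixes v :: "real^'n" and \<alpha> :: "nat \<Rightarrow> real^'n" and K Q :: nat and C \<epsilon> :: real
  assumes "norm v = 1" "\<forall>i<k. \<bar>\<alpha> i \<bullet> v\<bar> \<le> \<epsilon>" "\<forall>i<k. norm (\<alpha> i) \<le> C" "0 \<le> C"
    and "1 \<le> K" "2 * real CARD('n) * C * real K \<le> real Q" "2 * CARD('n) \<le> Q"
    and "4 * real K * real Q ^ CARD('n) * \<epsilon> \<le> 1"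
  obtains w where "w \<in> lattice_points" "real K / 2 \<le> norm w"
    "norm w \<le> real K * real Q ^ CARD('n) + real K" "\<forall>i<k. \<bar>\<alpha> i \<bullet> w\<bar> \<le> 1"
proof -
  define n where "n = CARD('n)"
  have "1 \<le> Q"
    using assms(7) zero_less_card_finite[where 'a='n] by linarith
  then obtain w \<mu> where w: "w \<in> lattice_points" and \<mu>: "real K \<le> \<mu>" "\<mu> \<le> real K * real Q ^ n"
    and err: "norm (w - \<mu> *\<^sub>R v) \<le> real K * (real n / real Q)"
    unfolding n_def by (rule lattice_vector_near_ray)
  have err_le: "K * (n / Q) \<le> K / 2" "C * (K * (n / Q)) \<le> 1 / 2"
    using assms(6,7) \<open>1 \<le> Q\<close> mult_left_mono[of "2 * real n" Q "real K"]
    unfolding n_def by (simp_all add: field_simps)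
  have "\<bar>\<alpha> i \<bullet> w\<bar> \<le> 1" if "i < k" for i
  proof -
    have "\<bar>\<alpha> i \<bullet> (w - \<mu> *\<^sub>R v)\<bar> \<le> C * (K * (n / Q))"
      using Cauchy_Schwarz_ineq2[of "\<alpha> i"] assms(3,4) err that
      by (meson mult_mono norm_ge_zero order_trans)
    moreover have "\<mu> * \<bar>\<alpha> i \<bullet> v\<bar> \<le> (real K * real Q ^ n) * \<epsilon>"
      using assms(2,5) that \<mu> by (intro mult_mono) auto
    moreover have "\<bar>\<alpha> i \<bullet> w\<bar> = \<bar>\<alpha> i \<bullet> (w - \<mu> *\<^sub>R v) + \<mu> * (\<alpha> i \<bullet> v)\<bar>"
      by (simp add: inner_diff_right)
    moreover have "\<dots> \<le> \<bar>\<alpha> i \<bullet> (w - \<mu> *\<^sub>R v)\<bar> + \<mu> * \<bar>\<alpha> i \<bullet> v\<bar>"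
      using \<mu>(1) assms(5) by (intro order_trans[OF abs_triangle_ineq]) (simp add: abs_mult)
    ultimately show ?thesis
      using err_le assms(8) unfolding n_def by linarith
  qed
  moreover have "real K / 2 \<le> norm w" "norm w \<le> real K * real Q ^ n + real K"
  proof -
    have "norm (\<mu> *\<^sub>R v) = \<mu>"
      using assms(1,5) \<mu>(1) by simp
    moreover note norm_triangle_ineq2[of "\<mu> *\<^sub>R v" w] norm_triangle_sub[of w "\<mu> *\<^sub>R v"]
      norm_minus_commute[of "\<mu> *\<^sub>R v" w]
    ultimately show "real K / 2 \<le> norm w" "norm w \<le> real K * real Q ^ n + real K"
      using err err_le(1) \<mu> by linarith+
  qed
  ultimately show thesis
    using that w unfolding n_def by blast
qed

lemma lattice_vector_nearly_orthogonal:
  fixes C r :: real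
  assumes "0 \<le> C"
  obtains R where "\<And>k (\<alpha> :: nat \<Rightarrow> real^'n). k \<le> CARD('n) \<Longrightarrow> \<forall>i<k. norm (\<alpha> i) \<le> C \<Longrightarrow>
      \<forall>u\<in>lattice_points. u \<noteq> 0 \<longrightarrow> norm u \<le> R \<longrightarrow> (\<exists>i<k. 0 < \<alpha> i \<bullet> u) \<Longrightarrow>
      \<exists>w\<in>lattice_points. r < norm w \<and> norm w \<le> R \<and> (\<forall>i<k. \<bar>\<alpha> i \<bullet> w\<bar> \<le> 1)"
proof -
  \<comment> \<open>K makes the final vector longer than r, Q keeps the approximation error at most 1/2
      after scaling by K, and \<epsilon> keeps the drift along v at most 1/4.\<close>
  define n where "n = CARD('n)"
  define K :: nat where "K = nat \<lceil>2 * r\<rceil> + 1"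
  define Q :: nat where "Q = nat \<lceil>2 * real n * C * real K\<rceil> + 2 * n"
  define \<epsilon> :: real where "\<epsilon> = 1 / (4 * real K * real Q ^ n)"
  define R where "R = (n * C + 1) / \<epsilon> + n + real K * real Q ^ n + real K"
  have K: "2 * r < real K" "1 \<le> K"
    unfolding K_def by linarith+
  have Q: "2 * real n * C * real K \<le> real Q" "2 * n \<le> Q"
    unfolding Q_def by linarith+
  then have "0 < Q"
    using one_le_CARD[where 'n='n] unfolding n_def by linarith
  then have \<epsilon>: "0 < \<epsilon>" "4 * real K * real Q ^ n * \<epsilon> \<le> 1"
    using K by (simp_all add: \<epsilon>_def)
  have "0 \<le> (n * C + 1) / \<epsilon>"
    using assms \<epsilon>(1) by simp
  show thesis
  proof (rule that)
    fix k and \<alpha> :: "nat \<Rightarrow> real^'n"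
    assume k: "k \<le> CARD('n)" and \<alpha>: "\<forall>i<k. norm (\<alpha> i) \<le> C"
      and increasing: "\<forall>u\<in>lattice_points. u \<noteq> 0 \<longrightarrow> norm u \<le> R \<longrightarrow> (\<exists>i<k. 0 < \<alpha> i \<bullet> u)"
    have "(n * C + 1) / \<epsilon> + n \<le> R"
      by (simp add: R_def)
    then have "\<forall>u\<in>lattice_points. u \<noteq> 0 \<longrightarrow> norm u \<le> (n * C + 1) / \<epsilon> + n \<longrightarrow>
        (\<exists>i<k. 0 < \<alpha> i \<bullet> u)"
      using increasing by (meson order_trans)
    then obtain v where "norm v = 1" "\<forall>i<k. \<bar>\<alpha> i \<bullet> v\<bar> \<le> \<epsilon>"
      using unit_vector_nearly_orthogonal[OF k \<epsilon>(1) assms \<alpha>] unfolding n_def by blast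
    then obtain w where "w \<in> lattice_points" "real K / 2 \<le> norm w"
      "norm w \<le> real K * real Q ^ n + real K" "\<forall>i<k. \<bar>\<alpha> i \<bullet> w\<bar> \<le> 1"
      using long_lattice_vector_nearly_orthogonal[OF _ _ \<alpha> assms K(2) Q[unfolded n_def]
          \<epsilon>(2)[unfolded n_def]]
      unfolding n_def by blast
    moreover have "r < norm w" "norm w \<le> R"
      using calculation(2,3) K(1) \<open>0 \<le> (n * C + 1) / \<epsilon>\<close> unfolding R_def by linarith+
    ultimately show "\<exists>w\<in>lattice_points. r < norm w \<and> norm w \<le> R \<and> (\<forall>i<k. \<bar>\<alpha> i \<bullet> w\<bar> \<le> 1)"
      by blast
  qed
qed

section \<open>Systems with fewer than four inequalities\<close>

lemma translate_in_box_B: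
  assumes "X \<subseteq> lattice_points" "\<forall>x\<in>X. norm x \<le> \<rho>" "\<rho> + R \<le> real T"
    and "x \<in> X" "u \<in> lattice_points" "norm u \<le> R"
  shows "x + u \<in> box_B T"
proof (rule lattice_point_in_box_B)
  show "x + u \<in> lattice_points"
    using assms(1,4,5) lattice_points_add by blast
  show "norm (x + u) \<le> real T"
    using norm_triangle_ineq[of x u] assms(2-6) by force
qed

lemma separating_system_box_B_increases:
  fixes X :: "(real^'n) set"
  assumes "finite X" "X \<noteq> {}" "X \<subseteq> lattice_points" "\<forall>x\<in>X. norm x \<le> \<rho>" "\<rho> + R \<le> real T"
    and "separating_system k a b X (box_B T)" "u \<in> lattice_points" "u \<noteq> 0" "norm u \<le> R"
  obtains i where "i < k" "0 < a i \<bullet> u"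
  using separating_system_increases_along[OF assms(1,2,6,8)] translate_in_box_B[OF assms(3-5) _ assms(7,9)]
  by metis

lemma four_le_separating_system_box_B:
  fixes X :: "(real^'n) set"
  assumes "finite X" "X \<noteq> {}" "X \<subseteq> lattice_points" "\<forall>x\<in>X. norm x \<le> \<rho>" "\<rho> + R \<le> real T"
    and "separating_system k a b X (box_B T)"
    and "w \<in> lattice_points" "2 * \<rho> < norm w" "norm w \<le> R" "\<forall>i<k. \<bar>a i \<bullet> w\<bar> \<le> width X (a i)"
  shows "4 \<le> k"
proof (rule four_le_separating_system[OF assms(1,2,6) _ _ assms(10)])
  have outside: "x + u \<notin> X" if "x \<in> X" "2 * \<rho> < norm u" for x u
  proof
    assume "x + u \<in> X"
    then have "norm (x + u) \<le> \<rho>" "norm x \<le> \<rho>"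
      using assms(4) that(1) by auto
    then show False
      using that(2) norm_triangle_ineq4[of "x + u" x] by simp
  qed
  show "\<forall>x\<in>X. x + w \<in> box_B T - X"
    using translate_in_box_B[OF assms(3-5) _ assms(7,9)] outside assms(8) by blast
  show "\<forall>x\<in>X. x - w \<in> box_B T - X"
    using translate_in_box_B[OF assms(3-5) _ lattice_points_uminus[OF assms(7)]]
      outside[of _ "- w"] assms(8,9) by auto
qed

lemma large_box_B_four_le:
  fixes X :: "(real^'n) set"
  assumes "finite X" "aff_dim X = CARD('n)" "X \<subseteq> lattice_points" "3 \<le> CARD('n)"
  obtains T where "0 < T" "\<And>k a b. separating_system k a b X (box_B T) \<Longrightarrow> 4 \<le> k"
proof -
  have "X \<noteq> {}"
    using assms(2) by auto
  obtain C where C: "0 < C" "\<forall>a. norm a \<le> C * width X a"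
    using norm_le_width[OF assms(1)] assms(2) by auto
  define \<rho> where "\<rho> = Max (norm ` X)"
  have \<rho>: "\<forall>x\<in>X. norm x \<le> \<rho>"
    using assms(1) by (simp add: \<rho>_def)
  from C(1) have "0 \<le> C"
    by simp
  then obtain R where R: "\<And>k (\<alpha> :: nat \<Rightarrow> real^'n). k \<le> CARD('n) \<Longrightarrow> \<forall>i<k. norm (\<alpha> i) \<le> C \<Longrightarrow>
      \<forall>u\<in>lattice_points. u \<noteq> 0 \<longrightarrow> norm u \<le> R \<longrightarrow> (\<exists>i<k. 0 < \<alpha> i \<bullet> u) \<Longrightarrow>
      \<exists>w\<in>lattice_points. 2 * \<rho> < norm w \<and> norm w \<le> R \<and> (\<forall>i<k. \<bar>\<alpha> i \<bullet> w\<bar> \<le> 1)"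
    using lattice_vector_nearly_orthogonal[where 'n='n and r="2 * \<rho>", OF \<open>0 \<le> C\<close>] by blast
  define T :: nat where "T = nat \<lceil>\<rho> + R\<rceil> + 1"
  have T: "0 < T" "\<rho> + R \<le> real T"
    unfolding T_def by linarith+
  have "4 \<le> k" if sep: "separating_system k a b X (box_B T)" for k a b
  proof (rule ccontr)
    assume "\<not> 4 \<le> k"
    then have "k \<le> CARD('n)"
      using assms(4) by linarith
    define \<alpha> where "\<alpha> i = a i /\<^sub>R width X (a i)" for i
    note normalized = normalized_by_width[OF assms(1) \<open>X \<noteq> {}\<close> C]
    have "\<forall>i<k. norm (\<alpha> i) \<le> C"
      using normalized(1) by (simp add: \<alpha>_def)
    moreover have "\<forall>u\<in>lattice_points. u \<noteq> 0 \<longrightarrow> norm u \<le> R \<longrightarrow> (\<exists>i<k. 0 < \<alpha> i \<bullet> u)"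
      using separating_system_box_B_increases[OF assms(1) \<open>X \<noteq> {}\<close> assms(3) \<rho> T(2) sep]
        normalized(2) unfolding \<alpha>_def by metis
    ultimately obtain w where w: "w \<in> lattice_points" "2 * \<rho> < norm w" "norm w \<le> R"
      "\<forall>i<k. \<bar>\<alpha> i \<bullet> w\<bar> \<le> 1"
      using R[OF \<open>k \<le> CARD('n)\<close>] by blast
    moreover have "\<forall>i<k. \<bar>a i \<bullet> w\<bar> \<le> width X (a i)"
      using w(4) normalized(3) unfolding \<alpha>_def by blast
    ultimately have "4 \<le> k"
      using four_le_separating_system_box_B[OF assms(1) \<open>X \<noteq> {}\<close> assms(3) \<rho> T(2) sep] by blast
    with \<open>\<not> 4 \<le> k\<close> show False ..
  qed
  with T(1) show thesis
    using that by blast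
qed

theorem proposition3p2:
  fixes X :: "(real^3) set"
  assumes "finite X"
    and "aff_dim X = 3"
    and "lattice_convex X"
  shows "rc_l X \<ge> 4"
proof -
  have lattice: "X \<subseteq> lattice_points" "convex hull X \<inter> lattice_points = X"
    using assms(3) by (auto simp: lattice_convex_def)
  obtain T where T: "0 < T" "\<And>k a b. separating_system k a b X (box_B T) \<Longrightarrow> 4 \<le> k"
    using large_box_B_four_le[OF assms(1) _ lattice(1)] assms(2) by auto
  have "box_B T \<inter> convex hull X \<subseteq> X"
    using lattice(2) by (auto simp: box_B_def)
  then have "4 \<le> rc X (box_B T)"
    using le_rc[OF assms(1) finite_box_B] T(2) by blast
  then have "enat 4 \<le> rc_l X"
    using rc_box_B_le_rc_l[OF T(1)] order_trans by (metis enat_ord_simps(1))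
  then show ?thesis
    by (simp add: numeral_eq_enat)
qed

end
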